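(* For every $n\ge3$ with $n\neq6$, $\operatorname{sdim}C_n=2$, while $\operatorname{sdim}C_6=3$.
   Context: $C_n$ is the cycle graph on $n$ vertices. A unit-distance embedding of a graph $G$ in $\mathbb{R}^n$ is an injective map $f$ from the vertex set of $G$ to $\mathbb{R}^n$ such that $|f(u)-f(v)|=1$ for every edge $uv$ and no point $f(w)$ lies on the segment $[f(u),f(v)]$ for an edge $uv$ with $w\notin\{u,v\}$ (edges may cross one another). $G$ admits a spherical embedding of dimension $k$ and radius $r$ if $G$ has a unit-distance embedding in $\mathbb{R}^k$ all of whose vertices lie on a sphere $\{x\in\mathbb{R}^k:|x-c|=r\}$. The spherical dimension $\operatorname{sdim}G$ is the least $k$ such that $G$ admits a spherical embedding of dimension $k$ and some radius $r<1$. *)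

theory Defs
  imports Complex_Main
begin

text \<open>Points of R^k are represented as functions nat => real vanishing at all
coordinates i >= k (the dimension k varies inside the statement).\<close>

definition in_Rk :: "nat \<Rightarrow> (nat \<Rightarrow> real) \<Rightarrow> bool" where
  "in_Rk k x \<longleftrightarrow> (\<forall>i\<ge>k. x i = 0)"

definition edist :: "nat \<Rightarrow> (nat \<Rightarrow> real) \<Rightarrow> (nat \<Rightarrow> real) \<Rightarrow> real" where
  "edist k x y = sqrt (\<Sum>i<k. (x i - y i)^2)"

definition on_segment :: "(nat \<Rightarrow> real) \<Rightarrow> (nat \<Rightarrow> real) \<Rightarrow> (nat \<Rightarrow> real) \<Rightarrow> bool" where
  "on_segment p a b \<longleftrightarrow> (\<exists>t::real. 0 \<le> t \<and> t \<le> 1 \<and> p = (\<lambda>i. (1 - t) * a i + t * b i))"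

text \<open>A graph is given by a vertex set V and a set E of (unordered, given as ordered pairs) edges.\<close>

definition unit_dist_emb ::
  "'a set \<Rightarrow> ('a \<times> 'a) set \<Rightarrow> nat \<Rightarrow> ('a \<Rightarrow> nat \<Rightarrow> real) \<Rightarrow> bool" where
  "unit_dist_emb V E k f \<longleftrightarrow>
     (\<forall>v\<in>V. in_Rk k (f v)) \<and> inj_on f V \<and>
     (\<forall>(u,v)\<in>E. edist k (f u) (f v) = 1) \<and>
     (\<forall>(u,v)\<in>E. \<forall>w\<in>V. w \<noteq> u \<and> w \<noteq> v \<longrightarrow> \<not> on_segment (f w) (f u) (f v))"

definition spherical_emb ::
  "'a set \<Rightarrow> ('a \<times> 'a) set \<Rightarrow> nat \<Rightarrow> real \<Rightarrow> bool" where
  "spherical_emb V E k r \<longleftrightarrow>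
     (\<exists>f c. unit_dist_emb V E k f \<and> in_Rk k c \<and> (\<forall>v\<in>V. edist k (f v) c = r))"

definition sdim :: "'a set \<Rightarrow> ('a \<times> 'a) set \<Rightarrow> nat" where
  "sdim V E = (LEAST k. \<exists>r<1. spherical_emb V E k r)"

definition cycle_V :: "nat \<Rightarrow> nat set" where
  "cycle_V n = {..<n}"

definition cycle_E :: "nat \<Rightarrow> (nat \<times> nat) set" where
  "cycle_E n = {(i, (i + 1) mod n) | i. i < n}"

end

theory Submission
  imports Defs
begin

text \<open>A sphere in \<open>\<real>\<close> has only two points, so no cycle has a spherical embedding of
dimension 1; and on any sphere the non-degeneracy condition is automatic, since a chord meets the
sphere only in its endpoints. In the plane, consecutive vertices of a unit cycle on a circle are
related by one fixed rotation \<open>u\<close> with \<open>u\<^sup>n = 1\<close>. For \<open>n \<noteq> 6\<close> the regular star polygon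
\<open>{n/k}\<close>, with \<open>k\<close> coprime to \<open>n\<close> and \<open>n/6 < k < n/2\<close>, has edge longer than its circumradius, so
rescaled to unit edges it has radius \<open>< 1\<close>. For \<open>n = 6\<close> injectivity forces \<open>u\<close> to be a
primitive sixth root of unity, whose edge equals the radius, so \<open>r = 1\<close>; in \<open>\<real>\<^sup>3\<close> the
hexagon \<open>0, e\<^sub>1, e\<^sub>1+e\<^sub>2, e\<^sub>1+e\<^sub>2+e\<^sub>3, e\<^sub>2+e\<^sub>3, e\<^sub>3\<close> of the unit cube lies on a sphere of
radius \<open>\<surd>3/2\<close>.\<close>

lemma edist_squared: "(edist k x y)\<^sup>2 = (\<Sum>i<k. (x i - y i)\<^sup>2)"
  unfolding edist_def by (simp add: sum_nonneg)

lemma in_Rk_ext: "in_Rk k x \<Longrightarrow> in_Rk k y \<Longrightarrow> (\<And>i. i < k \<Longrightarrow> x i = y i) \<Longrightarrow> x = y"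
  unfolding in_Rk_def by (rule ext) (metis not_le)

lemma in_Rk_mono: "in_Rk k x \<Longrightarrow> k \<le> k' \<Longrightarrow> in_Rk k' x"
  unfolding in_Rk_def by auto

lemma edist_eq_0_imp_eq:
  assumes "in_Rk k x" "in_Rk k y" "edist k x y = 0"
  shows "x = y"
proof -
  have "(\<Sum>i<k. (x i - y i)\<^sup>2) = 0"
    using assms(3) edist_squared[of k x y] by simp
  then have "\<forall>i\<in>{..<k}. (x i - y i)\<^sup>2 = 0"
    by (subst (asm) sum_nonneg_eq_0_iff) auto
  then show ?thesis
    using in_Rk_ext[OF assms(1,2)] by auto
qed

lemma edist_lift_dim:
  assumes "in_Rk k x" "in_Rk k y" "k \<le> k'"
  shows "edist k' x y = edist k x y"
proof -
  have split: "{..<k'} = {..<k} \<union> {k..<k'}"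
    using assms(3) by auto
  have "(\<Sum>i\<in>{k..<k'}. (x i - y i)\<^sup>2) = 0"
    using assms(1,2) unfolding in_Rk_def by (intro sum.neutral) auto
  then have "(\<Sum>i<k'. (x i - y i)\<^sup>2) = (\<Sum>i<k. (x i - y i)\<^sup>2)"
    unfolding split by (subst sum.union_disjoint) auto
  then show ?thesis
    unfolding edist_def by simp
qed

lemma spherical_emb_mono:
  assumes emb: "spherical_emb V E k r" and "k \<le> k'" and E: "E \<subseteq> V \<times> V"
  shows "spherical_emb V E k' r"
proof -
  obtain f c where f: "unit_dist_emb V E k f" and c: "in_Rk k c"
    and sphere: "\<forall>v\<in>V. edist k (f v) c = r"
    using emb unfolding spherical_emb_def by blast
  have in_k: "\<forall>v\<in>V. in_Rk k (f v)"
    using f unfolding unit_dist_emb_def by blast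
  have lift: "edist k' (f u) (f v) = edist k (f u) (f v)" if "u \<in> V" "v \<in> V" for u v
    using edist_lift_dim in_k that \<open>k \<le> k'\<close> by blast
  have "unit_dist_emb V E k' f"
    using f E in_k lift \<open>k \<le> k'\<close> unfolding unit_dist_emb_def
    by (fastforce simp: in_Rk_mono)
  moreover have "\<forall>v\<in>V. edist k' (f v) c = r"
    using sphere in_k c edist_lift_dim[OF _ _ \<open>k \<le> k'\<close>] by simp
  ultimately show ?thesis
    unfolding spherical_emb_def using c in_Rk_mono \<open>k \<le> k'\<close> by blast
qed

lemma sphere_chord_inter:
  assumes "in_Rk k a" "in_Rk k b" "a \<noteq> b"
    and "edist k a c = r" "edist k b c = r" "edist k p c = r"
    and "on_segment p a b"
  shows "p = a \<or> p = b"
proof -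
  obtain t where t: "0 \<le> t" "t \<le> 1" and p: "p = (\<lambda>i. (1 - t) * a i + t * b i)"
    using assms(7) unfolding on_segment_def by blast
  let ?S = "\<lambda>x y. \<Sum>i<k. (x i - y i)\<^sup>2"
  have radius: "?S a c = r\<^sup>2" "?S b c = r\<^sup>2" "?S p c = r\<^sup>2"
    using assms(4-6) edist_squared[of k _ c] by metis+
  have "?S p c = (\<Sum>i<k. (1-t)*(a i - c i)\<^sup>2 + t*(b i - c i)\<^sup>2 - t*(1-t)*(a i - b i)\<^sup>2)"
    by (rule sum.cong) (auto simp: p algebra_simps power2_eq_square)
  also have "\<dots> = (1-t) * ?S a c + t * ?S b c - t*(1-t) * ?S a b"
    by (simp add: sum.distrib sum_subtractf sum_distrib_left)
  finally have "t * (1-t) * ?S a b = 0"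
    unfolding radius by (simp add: algebra_simps)
  moreover have "?S a b \<noteq> 0"
    using edist_eq_0_imp_eq[OF assms(1,2)] assms(3) unfolding edist_def by auto
  ultimately have "t = 0 \<or> t = 1"
    by simp
  then show ?thesis
    using p by auto
qed

lemma spherical_embI:
  assumes in_k: "\<forall>v\<in>V. in_Rk k (f v)" and inj: "inj_on f V" and E: "E \<subseteq> V \<times> V"
    and unit: "\<forall>(u,v)\<in>E. edist k (f u) (f v) = 1"
    and c: "in_Rk k c" and sphere: "\<forall>v\<in>V. edist k (f v) c = r"
  shows "spherical_emb V E k r"
proof -
  have "\<not> on_segment (f w) (f u) (f v)"
    if uv: "(u,v) \<in> E" and w: "w \<in> V" "w \<noteq> u" "w \<noteq> v" for u v w
  proof
    assume seg: "on_segment (f w) (f u) (f v)"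
    have V: "u \<in> V" "v \<in> V"
      using E uv by auto
    have "f u \<noteq> f v"
      using unit uv unfolding edist_def by auto
    then have "f w = f u \<or> f w = f v"
      using sphere_chord_inter[of k "f u" "f v" c r "f w"] in_k V sphere w seg by auto
    then show False
      using inj w V unfolding inj_on_def by metis
  qed
  then show ?thesis
    unfolding spherical_emb_def unit_dist_emb_def using assms by blast
qed

lemma sdim_eqI:
  assumes E: "E \<subseteq> V \<times> V" and "r < 1" and emb: "spherical_emb V E k r"
    and lower: "\<And>r. r < 1 \<Longrightarrow> \<not> spherical_emb V E (k - 1) r"
  shows "sdim V E = k"
  unfolding sdim_def
proof (rule Least_equality)
  show "\<exists>r<1. spherical_emb V E k r"
    using assms by blast
next
  fix k' assume "\<exists>r<1. spherical_emb V E k' r"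
  then obtain r' where "r' < 1" "spherical_emb V E k' r'"
    by blast
  moreover have "0 < k"
    using lower[OF \<open>r < 1\<close>] emb by (cases k) auto
  ultimately show "k \<le> k'"
    using lower spherical_emb_mono[OF _ _ E, of k' r' "k - 1"] by fastforce
qed

lemma cycle_E_subset: "0 < n \<Longrightarrow> cycle_E n \<subseteq> cycle_V n \<times> cycle_V n"
  unfolding cycle_E_def cycle_V_def by auto

lemma cycle_E_memI: "i < n \<Longrightarrow> (i, Suc i mod n) \<in> cycle_E n"
  unfolding cycle_E_def by auto

lemma no_spherical_emb_dim1:
  assumes "a \<in> V" "b \<in> V" "d \<in> V" "a \<noteq> b" "a \<noteq> d" "b \<noteq> d"
  shows "\<not> spherical_emb V E 1 r"
proof
  assume "spherical_emb V E 1 r"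
  then obtain f c where f: "unit_dist_emb V E 1 f" and sphere: "\<forall>v\<in>V. edist 1 (f v) c = r"
    unfolding spherical_emb_def by blast
  have in_1: "\<forall>v\<in>V. in_Rk 1 (f v)" and inj: "inj_on f V"
    using f unfolding unit_dist_emb_def by blast+
  have dist: "\<bar>f v 0 - c 0\<bar> = r" if "v \<in> V" for v
    using sphere that unfolding edist_def by simp
  have eq: "f v = f w" if "v \<in> V" "w \<in> V" "f v 0 = f w 0" for v w
    using in_Rk_ext[of 1 "f v" "f w"] in_1 that by auto
  have "f a 0 = f b 0 \<or> f a 0 = f d 0 \<or> f b 0 = f d 0"
    using dist assms(1-3) by (smt (verit))
  then show False
    using eq assms inj unfolding inj_on_def by metis
qed

definition plane_point :: "complex \<Rightarrow> nat \<Rightarrow> real" where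
  "plane_point z = (\<lambda>j. if j = 0 then Re z else if j = 1 then Im z else 0)"

lemma in_Rk_plane_point: "in_Rk 2 (plane_point z)"
  unfolding in_Rk_def plane_point_def by auto

lemma edist_2: "edist 2 x y = cmod (Complex (x 0 - y 0) (x 1 - y 1))"
  by (simp add: edist_def cmod_def numeral_2_eq_2 add.commute)

lemma edist_plane_point: "edist 2 (plane_point z) (plane_point w) = cmod (z - w)"
  unfolding edist_2 plane_point_def by (simp add: cmod_def)

lemma plane_point_eq_iff: "plane_point z = plane_point w \<longleftrightarrow> z = w"
  by (metis complex_eq_iff one_neq_zero plane_point_def)

lemma planar_spherical_emb_to_complex:
  assumes "spherical_emb V E 2 r"
  obtains z where "\<forall>v\<in>V. cmod (z v) = r" and "inj_on z V"
    and "\<forall>(u,v)\<in>E. cmod (z u - z v) = 1"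
proof -
  obtain f c where f: "unit_dist_emb V E 2 f" and sphere: "\<forall>v\<in>V. edist 2 (f v) c = r"
    using assms unfolding spherical_emb_def by blast
  define z where "z v = Complex (f v 0 - c 0) (f v 1 - c 1)" for v
  have diff: "z u - z v = Complex (f u 0 - f v 0) (f u 1 - f v 1)" for u v
    unfolding z_def by (simp add: complex_eq_iff)
  have "inj_on z V"
  proof (rule inj_onI)
    fix u v assume "u \<in> V" "v \<in> V" "z u = z v"
    then have "f u = f v"
      using f in_Rk_ext[of 2 "f u" "f v"] unfolding unit_dist_emb_def z_def
      by (auto simp: complex_eq_iff less_2_cases_iff)
    then show "u = v"
      using f \<open>u \<in> V\<close> \<open>v \<in> V\<close> unfolding unit_dist_emb_def inj_on_def by blast
  qed
  moreover have "\<forall>v\<in>V. cmod (z v) = r"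
    using sphere unfolding z_def edist_2 by simp
  moreover have "\<forall>(u,v)\<in>E. cmod (z u - z v) = 1"
    using f unfolding unit_dist_emb_def diff edist_2 by simp
  ultimately show thesis
    using that by blast
qed

lemma cmod_1_minus_squared: "cmod u = 1 \<Longrightarrow> (cmod (1 - u))\<^sup>2 = 2 - 2 * Re u"
  using cmod_power2[of u] cmod_power2[of "1 - u"] by (simp add: power2_eq_square algebra_simps)

lemma cnj_mult_self_unit: "cmod u = 1 \<Longrightarrow> cnj u * u = 1"
  by (metis complex_norm_square mult.commute of_real_1 power_one)

lemma circle_unit_steps_same_rotation:
  fixes a b c :: complex
  assumes "cmod a = r" "cmod b = r" "cmod c = r" "r \<noteq> 0"
    and "cmod (a - b) = 1" "cmod (b - c) = 1" "a \<noteq> c"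
  shows "c / b = b / a"
proof -
  define u v where "u = b / a" and "v = c / b"
  have "a \<noteq> 0" "b \<noteq> 0"
    using assms by auto
  then have b: "b = u * a" and c: "c = v * b" and unit: "cmod u = 1" "cmod v = 1"
    using assms unfolding u_def v_def by (auto simp: norm_divide)
  have "cmod (a - b) = cmod a * cmod (1 - u)"
    by (simp add: b norm_mult[symmetric] algebra_simps)
  moreover have "cmod (b - c) = cmod b * cmod (1 - v)"
    by (simp add: c norm_mult[symmetric] algebra_simps)
  ultimately have "cmod (1 - u) = cmod (1 - v)"
    using assms(1,2,4-6) by (metis mult_left_cancel)
  then have Re: "Re u = Re v"
    using cmod_1_minus_squared[OF unit(1)] cmod_1_minus_squared[OF unit(2)] by simp
  moreover have "(Re u)\<^sup>2 + (Im u)\<^sup>2 = (Re v)\<^sup>2 + (Im v)\<^sup>2"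
    using unit unfolding cmod_def by auto
  ultimately have "Im v = Im u \<or> Im v = - Im u"
    by (metis add_left_cancel power2_eq_iff)
  then have "Im u = Im v \<or> v = cnj u"
    using Re by (auto simp: complex_eq_iff)
  moreover have "v \<noteq> cnj u"
    \<comment> \<open>turning back by the conjugate rotation would return to \<open>a\<close>\<close>
    using assms(7) cnj_mult_self_unit[OF unit(1)] by (auto simp: b c)
  ultimately have "Im u = Im v"
    by blast
  then show ?thesis
    using Re unfolding u_def v_def by (simp add: complex_eq_iff)
qed

lemma circle_unit_cycle_rotation:
  fixes z :: "nat \<Rightarrow> complex"
  assumes "3 \<le> n" "r \<noteq> 0"
    and circle: "\<And>i. i < n \<Longrightarrow> cmod (z i) = r"
    and steps: "\<And>i. i < n \<Longrightarrow> cmod (z i - z (Suc i mod n)) = 1"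
    and inj: "inj_on z {..<n}"
  shows "i < n \<Longrightarrow> z (Suc i mod n) = (z 1 / z 0) * z i"
proof (induction i)
  case 0
  have "z 0 \<noteq> 0"
    using circle[of 0] assms(1,2) by auto
  then show ?case
    using assms(1) by simp
next
  case (Suc i)
  then have IH: "z (Suc i) = (z 1 / z 0) * z i" and "i < n"
    by simp_all
  have "z i \<noteq> z (Suc (Suc i) mod n)"
  proof
    assume "z i = z (Suc (Suc i) mod n)"
    then have "i = Suc (Suc i) mod n"
      using inj \<open>i < n\<close> assms(1) unfolding inj_on_def by (metis lessThan_iff mod_less_divisor
          gr0I not_numeral_le_zero)
    then show False
      using Suc.prems assms(1) by (cases "Suc (Suc i) < n") (auto simp: not_less le_Suc_eq)
  qed
  moreover have "cmod (z i - z (Suc i)) = 1"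
    using steps[of i] Suc.prems by simp
  ultimately have "z (Suc (Suc i) mod n) / z (Suc i) = z (Suc i) / z i"
    using circle_unit_steps_same_rotation[OF circle circle circle \<open>r \<noteq> 0\<close> _ steps[OF Suc.prems]]
      Suc.prems \<open>i < n\<close> by simp
  also have "\<dots> = z 1 / z 0"
    using IH circle[of i] \<open>i < n\<close> \<open>r \<noteq> 0\<close> by auto
  finally show ?case
    using circle[of "Suc i"] Suc.prems \<open>r \<noteq> 0\<close> by (auto simp: divide_eq_eq)
qed

lemma circle_unit_cycle_powers:
  fixes z :: "nat \<Rightarrow> complex"
  assumes "3 \<le> n" "r \<noteq> 0"
    and circle: "\<And>i. i < n \<Longrightarrow> cmod (z i) = r"
    and steps: "\<And>i. i < n \<Longrightarrow> cmod (z i - z (Suc i mod n)) = 1"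
    and inj: "inj_on z {..<n}"
  defines "u \<equiv> z 1 / z 0"
  shows "\<And>i. i < n \<Longrightarrow> z i = u ^ i * z 0" and "u ^ n = 1"
proof -
  note rotation = circle_unit_cycle_rotation[OF assms(1-5), folded u_def]
  show pow: "z i = u ^ i * z 0" if "i < n" for i
    using that
  proof (induction i)
    case (Suc i)
    then show ?case
      using rotation[of i] by simp
  qed simp
  have "z 0 = u * z (n - 1)"
    using rotation[of "n - 1"] assms(1) by simp
  also have "\<dots> = u ^ n * z 0"
    using pow[of "n - 1"] assms(1) by (simp add: power_eq_if)
  finally show "u ^ n = 1"
    using circle[of 0] assms(1,2) by auto
qed

lemma primitive_sixth_root_Re:
  fixes u :: complex
  assumes "cmod u = 1" "u ^ 6 = 1" "u\<^sup>2 \<noteq> 1" "u ^ 3 \<noteq> 1"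
  shows "Re u = 1 / 2"
proof -
  have "(u ^ 3 - 1) * (u + 1) * (u\<^sup>2 - u + 1) = 0"
    using assms(2) by (simp add: algebra_simps eval_nat_numeral)
  moreover have "u + 1 \<noteq> 0"
    using assms(3) by (metis add_eq_0_iff2 power2_minus power_one)
  ultimately have "u\<^sup>2 - u + 1 = 0"
    using assms(4) by simp
  then have "cnj u * (u\<^sup>2 - u + 1) = 0"
    by simp
  then have "u - 1 + cnj u = 0"
    using cnj_mult_self_unit[OF assms(1)] by (simp add: algebra_simps power2_eq_square)
  then show ?thesis
    by (simp add: complex_eq_iff)
qed

lemma C6_no_planar_spherical_emb:
  assumes "r < 1"
  shows "\<not> spherical_emb (cycle_V 6) (cycle_E 6) 2 r"
proof
  assume "spherical_emb (cycle_V 6) (cycle_E 6) 2 r"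
  then obtain z where circle_V: "\<forall>v\<in>cycle_V 6. cmod (z v) = r" and inj: "inj_on z {..<6}"
    and steps_E: "\<forall>(u,v)\<in>cycle_E 6. cmod (z u - z v) = 1"
    unfolding cycle_V_def by (rule planar_spherical_emb_to_complex)
  have circle: "\<And>i. i < 6 \<Longrightarrow> cmod (z i) = r"
    using circle_V unfolding cycle_V_def by simp
  have steps: "\<And>i. i < 6 \<Longrightarrow> cmod (z i - z (Suc i mod 6)) = 1"
    using steps_E cycle_E_memI by fastforce
  have "r \<noteq> 0"
    using circle[of 0] circle[of 1] steps[of 0] by auto
  define u where "u = z 1 / z 0"
  note powers = circle_unit_cycle_powers[OF _ \<open>r \<noteq> 0\<close> circle steps inj, folded u_def, simplified]
  have "z 0 \<noteq> 0"
    using circle[of 0] \<open>r \<noteq> 0\<close> by auto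
  have "cmod u = 1"
    using circle[of 0] circle[of 1] \<open>r \<noteq> 0\<close> unfolding u_def by (simp add: norm_divide)
  moreover have "u\<^sup>2 \<noteq> 1" "u ^ 3 \<noteq> 1"
    using inj_onD[OF inj, of 2 0] inj_onD[OF inj, of 3 0] powers(1)[of 2] powers(1)[of 3] by auto
  ultimately have "Re u = 1 / 2"
    by (rule primitive_sixth_root_Re[OF _ powers(2)])
  then have "(cmod (1 - u))\<^sup>2 = 1"
    using cmod_1_minus_squared[OF \<open>cmod u = 1\<close>] by simp
  then have "cmod (1 - u) = 1"
    using norm_ge_zero[of "1 - u"] by (smt (verit) power2_eq_1_iff)
  moreover have "cmod (z 0 - z 1) = cmod (z 0) * cmod (1 - u)"
    using \<open>z 0 \<noteq> 0\<close> unfolding u_def by (simp add: norm_mult[symmetric] algebra_simps)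
  ultimately have "r = 1"
    using circle[of 0] steps[of 0] by simp
  then show False
    using assms by simp
qed

definition cube_hexagon :: "nat \<Rightarrow> nat \<Rightarrow> real" where
  "cube_hexagon i = (\<lambda>j.
     if j = 0 then [0,1,1,1,0,0] ! i
     else if j = 1 then [0,0,1,1,1,0] ! i
     else if j = 2 then [0,0,0,1,1,1] ! i
     else 0)"

lemma C6_cube_spherical_emb: "spherical_emb (cycle_V 6) (cycle_E 6) 3 (sqrt (3/4))"
proof (rule spherical_embI[where f = cube_hexagon and c = "\<lambda>j. if j < 3 then 1/2 else 0"])
  have V: "cycle_V 6 = {0,1,2,3,4,5}"
    unfolding cycle_V_def by auto
  have E: "cycle_E 6 \<subseteq> {(0,1),(1,2),(2,3),(3,4),(4,5),(5,0)}"
  proof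
    fix e assume "e \<in> cycle_E 6"
    then obtain i where "e = (i, Suc i mod 6)" "i < 6"
      unfolding cycle_E_def by auto
    moreover have "i = 0 \<or> i = 1 \<or> i = 2 \<or> i = 3 \<or> i = 4 \<or> i = 5"
      using \<open>i < 6\<close> by arith
    ultimately show "e \<in> {(0,1),(1,2),(2,3),(3,4),(4,5),(5,0)}"
      by auto
  qed
  have sum3: "(\<Sum>i<3. g i) = g 0 + g 1 + g 2" for g :: "nat \<Rightarrow> real"
    by (simp add: eval_nat_numeral)
  show "\<forall>v\<in>cycle_V 6. in_Rk 3 (cube_hexagon v)"
    unfolding in_Rk_def cube_hexagon_def by auto
  show "inj_on cube_hexagon (cycle_V 6)"
  proof (rule inj_onI)
    fix v w assume v: "v \<in> cycle_V 6" and w: "w \<in> cycle_V 6"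
      and eq: "cube_hexagon v = cube_hexagon w"
    have "cube_hexagon v 0 = cube_hexagon w 0" "cube_hexagon v 1 = cube_hexagon w 1"
      "cube_hexagon v 2 = cube_hexagon w 2"
      using eq by auto
    then show "v = w"
      using v w unfolding V by (auto simp: cube_hexagon_def)
  qed
  show "cycle_E 6 \<subseteq> cycle_V 6 \<times> cycle_V 6"
    by (rule cycle_E_subset) simp
  have "\<forall>(u,v)\<in>{(0,1),(1,2),(2,3),(3,4),(4,5),(5,0)}. edist 3 (cube_hexagon u) (cube_hexagon v) = 1"
    unfolding edist_def sum3 by (simp add: cube_hexagon_def)
  then show "\<forall>(u,v)\<in>cycle_E 6. edist 3 (cube_hexagon u) (cube_hexagon v) = 1"
    using E by blast
  show "in_Rk 3 (\<lambda>j. if j < 3 then 1/2 else 0)"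
    unfolding in_Rk_def by auto
  show "\<forall>v\<in>cycle_V 6. edist 3 (cube_hexagon v) (\<lambda>j. if j < 3 then 1/2 else 0) = sqrt (3/4)"
    unfolding V edist_def sum3 by (simp add: cube_hexagon_def power2_eq_square)
qed

lemma cmod_1_minus_cis_gt_1:
  assumes "pi / 3 < \<theta>" and "\<theta> < pi"
  shows "1 < cmod (1 - cis \<theta>)"
proof -
  have "cos \<theta> < 1/2"
    using cos_monotone_0_pi[of "pi/3" \<theta>] cos_60 assms by simp
  then have "1 < (cmod (1 - cis \<theta>))\<^sup>2"
    using cmod_1_minus_squared[of "cis \<theta>"] by simp
  then show ?thesis
    by (smt (verit) norm_ge_zero power_le_one)
qed

lemma cis_multiples_inj_on:
  assumes "coprime k n" and "real n * \<theta> = 2 * pi * real k"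
  shows "inj_on (\<lambda>i. cis (real i * \<theta>)) {..<n}"
proof (rule inj_onI)
  fix i j assume "i \<in> {..<n}" "j \<in> {..<n}" and "cis (real i * \<theta>) = cis (real j * \<theta>)"
  then have "cis ((real i - real j) * \<theta>) = 1"
    by (simp add: cis_divide[symmetric] left_diff_distrib)
  then have "cos ((real i - real j) * \<theta>) = 1"
    by (simp add: complex_eq_iff)
  then obtain m :: int where "(real i - real j) * \<theta> = real_of_int m * 2 * pi"
    using cos_one_2pi_int by blast
  then have "((real i - real j) * real k) * (2 * pi) = (real_of_int m * real n) * (2 * pi)"
    using assms(2) by (metis mult.assoc mult.commute)
  then have "(real i - real j) * real k = real_of_int m * real n"
    by simp
  then have "real_of_int ((int i - int j) * int k) = real_of_int (int n * m)"
    by (simp add: algebra_simps)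
  then have "int n dvd (int i - int j) * int k"
    by (intro dvdI) (simp only: of_int_eq_iff)
  moreover have "coprime (int n) (int k)"
    using assms(1) by (simp add: coprime_commute)
  ultimately have "int n dvd int i - int j"
    using coprime_dvd_mult_left_iff by blast
  moreover have "\<bar>int i - int j\<bar> < int n"
    using \<open>i \<in> {..<n}\<close> \<open>j \<in> {..<n}\<close> by auto
  ultimately show "i = j"
    using dvd_imp_le_int[of "int i - int j" "int n"] by auto
qed

lemma star_polygon_spherical_emb:
  assumes "3 \<le> n" and "coprime k n" and "n < 6 * k" and "2 * k < n"
  shows "\<exists>r<1. spherical_emb (cycle_V n) (cycle_E n) 2 r"
proof -
  define \<theta> where "\<theta> = 2 * pi * real k / real n"
  define d where "d = cmod (1 - cis \<theta>)"
  define r where "r = 1 / d"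
  have "pi / 3 < \<theta>" "\<theta> < pi"
    using assms(1,3,4) unfolding \<theta>_def by (simp_all add: field_simps)
  then have "d > 1"
    unfolding d_def by (rule cmod_1_minus_cis_gt_1)
  then have "0 < r" "r < 1"
    unfolding r_def by auto
  define z where "z i = complex_of_real r * cis (real i * \<theta>)" for i
  have n_\<theta>: "real n * \<theta> = 2 * pi * real k"
    using assms(1) unfolding \<theta>_def by simp
  then have "z n = z 0"
    unfolding z_def by simp
  moreover have "z (Suc i) = z i * cis \<theta>" for i
    unfolding z_def by (simp add: cis_mult distrib_right mult.assoc add.commute)
  ultimately have z_next: "z (Suc i mod n) = z i * cis \<theta>" if "i < n" for i
    using that by (cases "Suc i < n") (auto simp: not_less_eq less_Suc_eq)
  have inj_z: "inj_on z (cycle_V n)"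
    using cis_multiples_inj_on[OF assms(2) n_\<theta>] \<open>0 < r\<close>
    unfolding z_def cycle_V_def inj_on_def by simp
  have unit_z: "cmod (z i - z (Suc i mod n)) = 1" if "i < n" for i
  proof -
    have "z i - z (Suc i mod n) = z i * (1 - cis \<theta>)"
      using z_next[OF that] by (simp add: algebra_simps)
    then have "cmod (z i - z (Suc i mod n)) = r * d"
      using \<open>0 < r\<close> unfolding d_def by (simp add: z_def norm_mult)
    then show ?thesis
      using \<open>d > 1\<close> unfolding r_def by simp
  qed
  have "spherical_emb (cycle_V n) (cycle_E n) 2 r"
  proof (rule spherical_embI[where f = "plane_point \<circ> z" and c = "plane_point 0"])
    show "\<forall>v\<in>cycle_V n. in_Rk 2 ((plane_point \<circ> z) v)"
      by (simp add: in_Rk_plane_point)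
    show "inj_on (plane_point \<circ> z) (cycle_V n)"
      using inj_z unfolding inj_on_def by (simp add: plane_point_eq_iff)
    show "cycle_E n \<subseteq> cycle_V n \<times> cycle_V n"
      using cycle_E_subset assms(1) by simp
    show "\<forall>(u,v)\<in>cycle_E n. edist 2 ((plane_point \<circ> z) u) ((plane_point \<circ> z) v) = 1"
      using unit_z unfolding cycle_E_def by (auto simp: edist_plane_point)
    show "in_Rk 2 (plane_point 0)"
      by (rule in_Rk_plane_point)
    show "\<forall>v\<in>cycle_V n. edist 2 ((plane_point \<circ> z) v) (plane_point 0) = r"
      using \<open>0 < r\<close> by (simp add: edist_plane_point z_def norm_mult)
  qed
  then show ?thesis
    using \<open>r < 1\<close> by blast
qed

lemma coprime_double_plus: "coprime (k::nat) (2 * k + j) \<longleftrightarrow> coprime k j"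
  by (simp add: coprime_iff_gcd_eq_1 gcd_add_mult)

lemma exists_star_polygon_step:
  assumes "3 \<le> n" "n \<noteq> 6"
  obtains k :: nat where "coprime k n" "n < 6 * k" "2 * k < n"
proof -
  have "odd n \<or> n mod 4 = 0 \<or> n mod 4 = 2"
    by presburger
  then consider "odd n" | "n mod 4 = 0" | "n mod 4 = 2"
    by argo
  then show thesis
  proof cases
    case 1
    define k where "k = n div 2"
    have n: "n = 2 * k + 1"
      using 1 unfolding k_def by presburger
    then have "coprime k n"
      unfolding n coprime_double_plus by simp
    then show thesis
      by (rule that) (use n assms in presburger)+
  next
    case 2
    define k where "k = n div 2 - 1"
    have n: "n = 2 * k + 2" and "odd k"
      using 2 assms unfolding k_def by presburger+
    then have "coprime k n"
      unfolding n coprime_double_plus by simp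
    then show thesis
      by (rule that) (use n assms in presburger)+
  next
    case 3
    \<comment> \<open>here \<open>n div 2 - 1\<close> is even, so step two further back\<close>
    define k where "k = n div 2 - 2"
    have n: "n = 2 * k + 4" and "odd k" and "3 \<le> k"
      using 3 assms unfolding k_def by presburger+
    have "coprime k (2\<^sup>2)"
      using \<open>odd k\<close> by (subst coprime_power_right_iff) simp
    then have "coprime k n"
      unfolding n coprime_double_plus by simp
    then show thesis
      by (rule that) (use n \<open>3 \<le> k\<close> in simp_all)
  qed
qed

lemma cycle_no_spherical_emb_dim1:
  assumes "3 \<le> n"
  shows "\<not> spherical_emb (cycle_V n) (cycle_E n) 1 r"
  using no_spherical_emb_dim1[of 0 "cycle_V n" 1 2] assms unfolding cycle_V_def by simp

theorem mainTheorem6: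
  shows "(\<forall>n::nat. n \<ge> 3 \<and> n \<noteq> 6 \<longrightarrow> sdim (cycle_V n) (cycle_E n) = 2)
         \<and> sdim (cycle_V 6) (cycle_E 6) = 3"
proof (intro conjI allI impI)
  fix n :: nat assume n: "n \<ge> 3 \<and> n \<noteq> 6"
  then obtain k where "coprime k n" "n < 6 * k" "2 * k < n"
    using exists_star_polygon_step by blast
  then obtain r where "r < 1" "spherical_emb (cycle_V n) (cycle_E n) 2 r"
    using star_polygon_spherical_emb n by blast
  then show "sdim (cycle_V n) (cycle_E n) = 2"
    using cycle_E_subset[of n] cycle_no_spherical_emb_dim1[of n] n by (intro sdim_eqI) auto
next
  have "sqrt (3/4) < sqrt (1::real)"
    by (rule real_sqrt_less_mono) simp
  then show "sdim (cycle_V 6) (cycle_E 6) = 3"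
    using cycle_E_subset[of 6] C6_cube_spherical_emb C6_no_planar_spherical_emb
    by (intro sdim_eqI) auto
qed

end
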